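(* Let $(G,E,\phi_c)$ be a twisted Exel–Pardo tuple and $e\in E^1$. The following are equivalent: (i) $\operatorname{Ann}_{\ell[G]}(ee^* )=0$; (ii) the only $g\in G$ which fixes $e$ strongly (i.e. $g(e)=e$ and $\phi(g,e)=1$) is $g=1$; (iii) the map $\nabla_e:G\to E^1\times G$, $g\mapsto(g^{-1}(e),\phi(g,g^{-1}(e)))$ is injective.
   Context: $\ell$ is a commutative unital ring, $\mathcal U(\ell)$ its unit group. A twisted Exel–Pardo tuple $(G,E,\phi_c)$: a graph $E=(E^0,E^1,r,s)$, a group $G$ acting on $E$ by graph automorphisms, $\phi:G\times E^1\to G$ with $\phi(gh,e)=\phi(g,h(e))\phi(h,e)$ and $\phi(g,e)(v)=g(v)$ for $v\in E^0$, and $c:G\times E^1\to\mathcal U(\ell)$ with $c(gh,e)=c(g,h(e))c(h,e)$. The Cohn algebra $C(G,E,\phi_c)$ is the $\ell$-algebra generated by $e,e^*$ ($e\in E^1$), $vg$ ($v\in E^0,g\in G$), $v:=v1$, subject to $e=s(e)er(e)$, $e^*=r(e)e^*s(e)$, $e^*f=\delta_{e,f}r(e)$, $(vg)(wh)=\delta_{v,g(w)}v(gh)$, $(vg)e=\delta_{v,g(s(e))}c(g,e)g(e)(r(g(e))\phi(g,e))$, $e^*(vg)=\delta_{v,s(e)}c(g,g^{-1}(e))(r(e)\phi(g,g^{-1}(e)))(g^{-1}(e))^*$. The group algebra $\ell[G]$ acts on the right on $ee^*\in C(G,E,\phi_c)$ by $ee^*\cdot g:=ee^*(s(e)g)$,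 and $\operatorname{Ann}_{\ell[G]}(ee^* )=\{\sum_g\lambda_gg\in\ell[G]:\sum_g\lambda_g\,ee^*(s(e)g)=0\}$ (this condition is the same whether computed in $C(G,E,\phi_c)$ or in the untwisted $C(G,E,\phi)$, with $c\equiv1$). *)

theory Defs
  imports "HOL-Algebra.Group"
begin

text \<open>The graph is E = (E0, E1, r, s) with E0 = UNIV :: 'v set and E1 = UNIV :: 'e set.\<close>

definition twisted_EP_tuple ::
  "('g, 'm) monoid_scheme \<Rightarrow> ('e \<Rightarrow> 'v) \<Rightarrow> ('e \<Rightarrow> 'v) \<Rightarrow> ('g \<Rightarrow> 'v \<Rightarrow> 'v) \<Rightarrow> ('g \<Rightarrow> 'e \<Rightarrow> 'e)
     \<Rightarrow> ('g \<Rightarrow> 'e \<Rightarrow> 'g) \<Rightarrow> ('g \<Rightarrow> 'e \<Rightarrow> 'l::comm_ring_1) \<Rightarrow> bool" where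
  "twisted_EP_tuple G r s actv acte phi c \<longleftrightarrow>
     group G
   \<and> actv \<one>\<^bsub>G\<^esub> = id \<and> acte \<one>\<^bsub>G\<^esub> = id
   \<and> (\<forall>g\<in>carrier G. \<forall>h\<in>carrier G. actv (g \<otimes>\<^bsub>G\<^esub> h) = actv g \<circ> actv h
                                      \<and> acte (g \<otimes>\<^bsub>G\<^esub> h) = acte g \<circ> acte h)
   \<and> (\<forall>g\<in>carrier G. \<forall>e. s (acte g e) = actv g (s e) \<and> r (acte g e) = actv g (r e))
   \<and> (\<forall>g\<in>carrier G. \<forall>e. phi g e \<in> carrier G)
   \<and> (\<forall>g\<in>carrier G. \<forall>h\<in>carrier G. \<forall>e.
          phi (g \<otimes>\<^bsub>G\<^esub> h) e = phi g (acte h e) \<otimes>\<^bsub>G\<^esub> phi h e)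
   \<and> (\<forall>g\<in>carrier G. \<forall>e. actv (phi g e) = actv g)
   \<and> (\<forall>g\<in>carrier G. \<forall>e. c g e dvd 1)
   \<and> (\<forall>g\<in>carrier G. \<forall>h\<in>carrier G. \<forall>e.
          c (g \<otimes>\<^bsub>G\<^esub> h) e = c g (acte h e) * c h e)"

text \<open>Elements are functions from words (lists of generators) to 'l; all elements we
  build have finite support.\<close>

definition fmon :: "'x list \<Rightarrow> 'x list \<Rightarrow> 'l::comm_ring_1" where
  "fmon w = (\<lambda>u. if u = w then 1 else 0)"

definition fmul :: "('x list \<Rightarrow> 'l::comm_ring_1) \<Rightarrow> ('x list \<Rightarrow> 'l) \<Rightarrow> 'x list \<Rightarrow> 'l" where
  "fmul p q = (\<lambda>w. \<Sum>i\<in>{0..length w}. p (take i w) * q (drop i w))"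

definition fsmult :: "'l::comm_ring_1 \<Rightarrow> ('x list \<Rightarrow> 'l) \<Rightarrow> 'x list \<Rightarrow> 'l" where
  "fsmult a p = (\<lambda>w. a * p w)"

definition fadd :: "('x list \<Rightarrow> 'l::comm_ring_1) \<Rightarrow> ('x list \<Rightarrow> 'l) \<Rightarrow> 'x list \<Rightarrow> 'l" where
  "fadd p q = (\<lambda>w. p w + q w)"

definition fdiff :: "('x list \<Rightarrow> 'l::comm_ring_1) \<Rightarrow> ('x list \<Rightarrow> 'l) \<Rightarrow> 'x list \<Rightarrow> 'l" where
  "fdiff p q = (\<lambda>w. p w - q w)"

definition fzero :: "'x list \<Rightarrow> 'l::comm_ring_1" where
  "fzero = (\<lambda>_. 0)"

inductive_set gen_ideal :: "('x list \<Rightarrow> 'l::comm_ring_1) set \<Rightarrow> ('x list \<Rightarrow> 'l) set"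
  for Rel where
  zero: "fzero \<in> gen_ideal Rel"
| gen: "\<rho> \<in> Rel \<Longrightarrow> fsmult a (fmul (fmul (fmon u) \<rho>) (fmon v)) \<in> gen_ideal Rel"
| add: "x \<in> gen_ideal Rel \<Longrightarrow> y \<in> gen_ideal Rel \<Longrightarrow> fadd x y \<in> gen_ideal Rel"

datatype ('v, 'e, 'g) cgen = Ed 'e | Es 'e | Vg 'v 'g
  \<comment> \<open>Ed e is e, Es e is e*, Vg v g is vg; the vertex v is Vg v 1.\<close>

definition cohn_rels ::
  "('g, 'm) monoid_scheme \<Rightarrow> ('e \<Rightarrow> 'v) \<Rightarrow> ('e \<Rightarrow> 'v) \<Rightarrow> ('g \<Rightarrow> 'v \<Rightarrow> 'v) \<Rightarrow> ('g \<Rightarrow> 'e \<Rightarrow> 'e)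
     \<Rightarrow> ('g \<Rightarrow> 'e \<Rightarrow> 'g) \<Rightarrow> ('g \<Rightarrow> 'e \<Rightarrow> 'l::comm_ring_1)
     \<Rightarrow> (('v, 'e, 'g) cgen list \<Rightarrow> 'l) set" where
  "cohn_rels G r s actv acte phi c =
     {fdiff (fmon [Ed e]) (fmon [Vg (s e) \<one>\<^bsub>G\<^esub>, Ed e, Vg (r e) \<one>\<^bsub>G\<^esub>]) | e. True}
   \<union> {fdiff (fmon [Es e]) (fmon [Vg (r e) \<one>\<^bsub>G\<^esub>, Es e, Vg (s e) \<one>\<^bsub>G\<^esub>]) | e. True}
   \<union> {fdiff (fmon [Es e, Ed f]) (if e = f then fmon [Vg (r e) \<one>\<^bsub>G\<^esub>] else fzero) | e f. True}
   \<union> {fdiff (fmon [Vg v g, Vg w h])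
            (if v = actv g w then fmon [Vg v (g \<otimes>\<^bsub>G\<^esub> h)] else fzero)
        | v w g h. g \<in> carrier G \<and> h \<in> carrier G}
   \<union> {fdiff (fmon [Vg v g, Ed e])
            (if v = actv g (s e)
             then fsmult (c g e) (fmon [Ed (acte g e), Vg (r (acte g e)) (phi g e)])
             else fzero)
        | v g e. g \<in> carrier G}
   \<union> {fdiff (fmon [Es e, Vg v g])
            (if v = s e
             then fsmult (c g (acte (inv\<^bsub>G\<^esub> g) e))
                    (fmon [Vg (r e) (phi g (acte (inv\<^bsub>G\<^esub> g) e)), Es (acte (inv\<^bsub>G\<^esub> g) e)])
             else fzero)
        | v g e. g \<in> carrier G}"

definition cohn_zero where
  "cohn_zero G r s actv acte phi c x \<longleftrightarrow> x \<in> gen_ideal (cohn_rels G r s actv acte phi c)"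

text \<open>Annihilator in the group algebra l[G] (finitely supported functions G -> l) of ee*,
  for the right action ee* . g = ee*(s(e)g).\<close>

definition EP_Ann ::
  "('g, 'm) monoid_scheme \<Rightarrow> ('e \<Rightarrow> 'v) \<Rightarrow> ('e \<Rightarrow> 'v) \<Rightarrow> ('g \<Rightarrow> 'v \<Rightarrow> 'v) \<Rightarrow> ('g \<Rightarrow> 'e \<Rightarrow> 'e)
     \<Rightarrow> ('g \<Rightarrow> 'e \<Rightarrow> 'g) \<Rightarrow> ('g \<Rightarrow> 'e \<Rightarrow> 'l::comm_ring_1) \<Rightarrow> 'e \<Rightarrow> ('g \<Rightarrow> 'l) set" where
  "EP_Ann G r s actv acte phi c e =
     {lam. finite {g. lam g \<noteq> 0} \<and> (\<forall>g. g \<notin> carrier G \<longrightarrow> lam g = 0)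
        \<and> cohn_zero G r s actv acte phi c
            (\<lambda>w. \<Sum>g\<in>{g. lam g \<noteq> 0}. lam g * fmon [Ed e, Es e, Vg (s e) g] w)}"

definition nabla ::
  "('g, 'm) monoid_scheme \<Rightarrow> ('g \<Rightarrow> 'e \<Rightarrow> 'e) \<Rightarrow> ('g \<Rightarrow> 'e \<Rightarrow> 'g) \<Rightarrow> 'e \<Rightarrow> 'g \<Rightarrow> 'e \<times> 'g" where
  "nabla G acte phi e g = (acte (inv\<^bsub>G\<^esub> g) e, phi g (acte (inv\<^bsub>G\<^esub> g) e))"

end

theory Submission
  imports Defs
begin

(* If g \<noteq> 1 fixes e strongly, the ghost-edge relation gives e* (s(e)g) = c(g,e) e*, so
   c(g,e) \<cdot> 1 - g is a nonzero element of the annihilator of ee*.  Conversely, let the Cohn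
   algebra act by monomial operators on the free module over triples (v, \<alpha>, k), \<alpha> a path and
   k \<in> G.  Taking f = g\<inverse>(e), the entry of ee*(s(e)k) from (s(f), f, 1) to (s(e), e, \<phi>(g,f))
   is c(k,f) if \<nabla>_e k = \<nabla>_e g and 0 otherwise; so when \<nabla>_e is injective, an annihilating
   \<Sum> \<lambda>_k k yields \<lambda>_g c(g,f) = 0, whence \<lambda>_g = 0.  Finally \<nabla>_e g = \<nabla>_e h iff g h\<inverse>
   fixes e strongly, which gives (ii) \<longleftrightarrow> (iii). *)

section \<open>Monomial representations of the free algebra\<close>

lemma fmul_fmon_fmon: "fmul (fmon u) (fmon v) = fmon (u @ v)"
proof
  fix w
  have split: "(take i w = u \<and> drop i w = v) \<longleftrightarrow> (i = length u \<and> w = u @ v)"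
    if "i \<le> length w" for i
    using that by (metis append_eq_conv_conj append_take_drop_id length_take min.absorb2)
  have "fmul (fmon u) (fmon v) w
      = (\<Sum>i\<in>{0..length w}. if i = length u \<and> w = u @ v then 1 else 0)"
    unfolding fmul_def fmon_def by (rule sum.cong) (auto simp: split)
  also have "\<dots> = fmon (u @ v) w"
    by (auto simp: fmon_def)
  finally show "fmul (fmon u) (fmon v) w = fmon (u @ v) w" .
qed

lemma fmul_fdiff_left: "fmul (fdiff p q) t = fdiff (fmul p t) (fmul q t)"
  by (simp add: fmul_def fdiff_def left_diff_distrib sum_subtractf)

lemma fmul_fdiff_right: "fmul t (fdiff p q) = fdiff (fmul t p) (fmul t q)"
  by (simp add: fmul_def fdiff_def right_diff_distrib sum_subtractf)

lemma fmul_fsmult_left: "fmul (fsmult a p) q = fsmult a (fmul p q)"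
  by (simp add: fmul_def fsmult_def sum_distrib_left mult.assoc)

lemma fmul_fsmult_right: "fmul p (fsmult a q) = fsmult a (fmul p q)"
  by (simp add: fmul_def fsmult_def sum_distrib_left mult.left_commute)

lemma fmul_fmon_binomial_fmon:
  "fmul (fmul (fmon u) (fdiff (fmon w1) (fsmult a (fmon w2)))) (fmon v)
     = fdiff (fmon (u @ w1 @ v)) (fsmult a (fmon (u @ w2 @ v)))"
  by (simp add: fmul_fdiff_left fmul_fdiff_right fmul_fsmult_left fmul_fsmult_right fmul_fmon_fmon)

lemma finite_support_fmon: "finite {w. fmon u w \<noteq> 0}"
  by (rule finite_subset[of _ "{u}"]) (auto simp: fmon_def)

lemma finite_support_fsmult: "finite {w. p w \<noteq> 0} \<Longrightarrow> finite {w. fsmult a p w \<noteq> 0}"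
  by (erule rev_finite_subset) (auto simp: fsmult_def)

lemma finite_support_fadd:
  "finite {w. p w \<noteq> 0} \<Longrightarrow> finite {w. q w \<noteq> 0} \<Longrightarrow> finite {w. fadd p q w \<noteq> 0}"
  by (rule finite_subset[of _ "{w. p w \<noteq> 0} \<union> {w. q w \<noteq> 0}"]) (auto simp: fadd_def)

lemma finite_support_fdiff:
  "finite {w. p w \<noteq> 0} \<Longrightarrow> finite {w. q w \<noteq> 0} \<Longrightarrow> finite {w. fdiff p q w \<noteq> 0}"
  by (rule finite_subset[of _ "{w. p w \<noteq> 0} \<union> {w. q w \<noteq> 0}"]) (auto simp: fdiff_def)

(* A monomial operator m on the free module with basis 's sends the basis vector x to
   fst (m x) \<cdot> snd (m x); mop_entry m x y is its matrix entry.  A word acts by composing the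
   operators of its letters, the last letter acting first. *)
definition mop_comp :: "('s \<Rightarrow> 'l::comm_ring_1 \<times> 's) \<Rightarrow> ('s \<Rightarrow> 'l \<times> 's) \<Rightarrow> 's \<Rightarrow> 'l \<times> 's" where
  "mop_comp m1 m2 x = (fst (m1 (snd (m2 x))) * fst (m2 x), snd (m1 (snd (m2 x))))"

definition mop_entry :: "('s \<Rightarrow> 'l::comm_ring_1 \<times> 's) \<Rightarrow> 's \<Rightarrow> 's \<Rightarrow> 'l" where
  "mop_entry m x y = (if snd (m x) = y then fst (m x) else 0)"

fun word_op :: "('a \<Rightarrow> 's \<Rightarrow> 'l::comm_ring_1 \<times> 's) \<Rightarrow> 'a list \<Rightarrow> 's \<Rightarrow> 'l \<times> 's" where
  "word_op T [] = (\<lambda>x. (1, x))"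
| "word_op T (a # w) = mop_comp (T a) (word_op T w)"

lemma mop_comp_assoc: "mop_comp m1 (mop_comp m2 m3) = mop_comp (mop_comp m1 m2) m3"
  by (rule ext) (simp add: mop_comp_def mult.assoc)

lemma word_op_append: "word_op T (u @ w) = mop_comp (word_op T u) (word_op T w)"
  by (induction u) (auto simp: mop_comp_def mop_comp_assoc)

lemma mop_entry_comp: "mop_entry (mop_comp m1 m2) x y = fst (m2 x) * mop_entry m1 (snd (m2 x)) y"
  by (simp add: mop_entry_def mop_comp_def)

lemma mop_apply_eq_sum:
  assumes "finite S" "snd (m x) \<in> S"
  shows "fst (m x) * F (snd (m x)) = (\<Sum>z\<in>S. mop_entry m x z * F z)"
proof -
  have "(\<Sum>z\<in>S. mop_entry m x z * F z) = (\<Sum>z\<in>S. if snd (m x) = z then fst (m x) * F z else 0)"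
    by (rule sum.cong) (auto simp: mop_entry_def)
  then show ?thesis using assms by simp
qed

definition binomial_holds :: "('a \<Rightarrow> 's \<Rightarrow> 'l::comm_ring_1 \<times> 's) \<Rightarrow> 'a list \<Rightarrow> 'l \<Rightarrow> 'a list \<Rightarrow> bool" where
  "binomial_holds T w1 a w2 \<longleftrightarrow>
     (\<forall>x y. mop_entry (word_op T w1) x y = a * mop_entry (word_op T w2) x y)"

lemma binomial_holds_mult:
  assumes "binomial_holds T w1 a w2"
  shows "binomial_holds T (u @ w1 @ v) a (u @ w2 @ v)"
  unfolding binomial_holds_def
proof (intro allI)
  fix x y
  define x' where "x' = snd (word_op T v x)"
  define F where "F z = mop_entry (word_op T u) z y" for z
  have "fst (word_op T w1 x') * F (snd (word_op T w1 x'))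
      = a * (fst (word_op T w2 x') * F (snd (word_op T w2 x')))"
  proof -
    let ?S = "{snd (word_op T w1 x'), snd (word_op T w2 x')}"
    have "fst (word_op T w1 x') * F (snd (word_op T w1 x'))
        = (\<Sum>z\<in>?S. mop_entry (word_op T w1) x' z * F z)"
      by (rule mop_apply_eq_sum) auto
    also have "\<dots> = a * (\<Sum>z\<in>?S. mop_entry (word_op T w2) x' z * F z)"
      using assms by (simp add: binomial_holds_def sum_distrib_left mult.assoc)
    also have "\<dots> = a * (fst (word_op T w2 x') * F (snd (word_op T w2 x')))"
      by (subst mop_apply_eq_sum) auto
    finally show ?thesis .
  qed
  then show "mop_entry (word_op T (u @ w1 @ v)) x y = a * mop_entry (word_op T (u @ w2 @ v)) x y"
    by (simp add: word_op_append mop_entry_comp mop_comp_def x'_def F_def mult_ac)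
qed

definition rep_entry :: "('a \<Rightarrow> 's \<Rightarrow> 'l::comm_ring_1 \<times> 's) \<Rightarrow> ('a list \<Rightarrow> 'l) \<Rightarrow> 's \<Rightarrow> 's \<Rightarrow> 'l" where
  "rep_entry T p x y = (\<Sum>w | p w \<noteq> 0. p w * mop_entry (word_op T w) x y)"

lemma rep_entry_eq_sum:
  assumes "finite S" "{w. p w \<noteq> 0} \<subseteq> S"
  shows "rep_entry T p x y = (\<Sum>w\<in>S. p w * mop_entry (word_op T w) x y)"
  unfolding rep_entry_def using assms by (intro sum.mono_neutral_left) auto

lemma rep_entry_fmon: "rep_entry T (fmon w) x y = mop_entry (word_op T w) x y"
  by (subst rep_entry_eq_sum[of "{w}"]) (auto simp: fmon_def)

lemma rep_entry_fsmult:
  assumes "finite {w. p w \<noteq> 0}"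
  shows "rep_entry T (fsmult a p) x y = a * rep_entry T p x y"
proof -
  have "{w. fsmult a p w \<noteq> 0} \<subseteq> {w. p w \<noteq> 0}"
    by (auto simp: fsmult_def)
  then show ?thesis
    using assms by (simp add: rep_entry_eq_sum[of "{w. p w \<noteq> 0}"] fsmult_def sum_distrib_left mult.assoc)
qed

lemma
  assumes "finite {w. p w \<noteq> 0}" "finite {w. q w \<noteq> 0}"
  shows rep_entry_fadd: "rep_entry T (fadd p q) x y = rep_entry T p x y + rep_entry T q x y"
    and rep_entry_fdiff: "rep_entry T (fdiff p q) x y = rep_entry T p x y - rep_entry T q x y"
proof -
  let ?S = "{w. p w \<noteq> 0} \<union> {w. q w \<noteq> 0}"
  have p: "rep_entry T p x y = (\<Sum>w\<in>?S. p w * mop_entry (word_op T w) x y)"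
    and q: "rep_entry T q x y = (\<Sum>w\<in>?S. q w * mop_entry (word_op T w) x y)"
    using assms by (auto intro: rep_entry_eq_sum)
  show "rep_entry T (fadd p q) x y = rep_entry T p x y + rep_entry T q x y"
    using assms unfolding p q
    by (subst rep_entry_eq_sum[of ?S]) (auto simp: fadd_def distrib_right sum.distrib)
  show "rep_entry T (fdiff p q) x y = rep_entry T p x y - rep_entry T q x y"
    using assms unfolding p q
    by (subst rep_entry_eq_sum[of ?S]) (auto simp: fdiff_def left_diff_distrib sum_subtractf)
qed

lemma rep_entry_sum:
  assumes "finite K" "\<And>k. k \<in> K \<Longrightarrow> finite {w. p k w \<noteq> 0}"
  shows "rep_entry T (\<lambda>w. \<Sum>k\<in>K. p k w) x y = (\<Sum>k\<in>K. rep_entry T (p k) x y)"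
proof -
  define S where "S = (\<Union>k\<in>K. {w. p k w \<noteq> 0})"
  have S: "finite S" "\<And>k. k \<in> K \<Longrightarrow> {w. p k w \<noteq> 0} \<subseteq> S"
    using assms by (auto simp: S_def)
  have "{w. (\<Sum>k\<in>K. p k w) \<noteq> 0} \<subseteq> S"
    by (auto simp: S_def intro: ccontr)
  then have "rep_entry T (\<lambda>w. \<Sum>k\<in>K. p k w) x y
      = (\<Sum>w\<in>S. \<Sum>k\<in>K. p k w * mop_entry (word_op T w) x y)"
    using S by (simp add: rep_entry_eq_sum sum_distrib_right)
  also have "\<dots> = (\<Sum>k\<in>K. rep_entry T (p k) x y)"
    using S by (subst sum.swap) (simp add: rep_entry_eq_sum)
  finally show ?thesis .
qed

lemma rep_entry_gen_ideal:
  assumes rels: "Rel \<subseteq> {fdiff (fmon w1) (fsmult a (fmon w2)) | w1 a w2. binomial_holds T w1 a w2}"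
    and "p \<in> gen_ideal Rel"
  shows "finite {w. p w \<noteq> 0} \<and> rep_entry T p x y = 0"
  using assms(2)
proof induction
  case zero
  show ?case by (simp add: fzero_def rep_entry_def)
next
  case (gen \<rho> b u v)
  obtain w1 a w2 where \<rho>: "\<rho> = fdiff (fmon w1) (fsmult a (fmon w2))"
    and holds: "binomial_holds T w1 a w2"
    using rels gen by blast
  have "mop_entry (word_op T (u @ w1 @ v)) x y = a * mop_entry (word_op T (u @ w2 @ v)) x y"
    using binomial_holds_mult[OF holds] by (simp add: binomial_holds_def)
  then show ?case
    unfolding \<rho> fmul_fmon_binomial_fmon
    by (simp add: finite_support_fmon finite_support_fsmult finite_support_fdiff
        rep_entry_fsmult rep_entry_fdiff rep_entry_fmon)
next
  case (add p q)
  then show ?case by (simp add: finite_support_fadd rep_entry_fadd)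
qed

section \<open>The path representation of the Cohn algebra\<close>

locale twisted_EP =
  fixes G :: "('g, 'm) monoid_scheme" (structure)
    and r s :: "'e \<Rightarrow> 'v"
    and actv :: "'g \<Rightarrow> 'v \<Rightarrow> 'v" and acte :: "'g \<Rightarrow> 'e \<Rightarrow> 'e"
    and phi :: "'g \<Rightarrow> 'e \<Rightarrow> 'g" and c :: "'g \<Rightarrow> 'e \<Rightarrow> 'l::comm_ring_1"
  assumes tuple: "twisted_EP_tuple G r s actv acte phi c"
begin

sublocale group G
  using tuple by (simp add: twisted_EP_tuple_def)

lemma actv_one: "actv \<one> = id"
  and acte_one: "acte \<one> = id"
  and actv_mult: "g \<in> carrier G \<Longrightarrow> h \<in> carrier G \<Longrightarrow> actv (g \<otimes> h) x = actv g (actv h x)"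
  and acte_mult: "g \<in> carrier G \<Longrightarrow> h \<in> carrier G \<Longrightarrow> acte (g \<otimes> h) f = acte g (acte h f)"
  and s_acte: "g \<in> carrier G \<Longrightarrow> s (acte g f) = actv g (s f)"
  and r_acte: "g \<in> carrier G \<Longrightarrow> r (acte g f) = actv g (r f)"
  and phi_closed [simp]: "g \<in> carrier G \<Longrightarrow> phi g f \<in> carrier G"
  and phi_mult: "g \<in> carrier G \<Longrightarrow> h \<in> carrier G \<Longrightarrow> phi (g \<otimes> h) f = phi g (acte h f) \<otimes> phi h f"
  and actv_phi [simp]: "g \<in> carrier G \<Longrightarrow> actv (phi g f) = actv g"
  and c_unit: "g \<in> carrier G \<Longrightarrow> c g f dvd 1"
  and c_mult: "g \<in> carrier G \<Longrightarrow> h \<in> carrier G \<Longrightarrow> c (g \<otimes> h) f = c g (acte h f) * c h f"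
  using tuple by (simp_all add: twisted_EP_tuple_def)

lemma phi_one [simp]: "phi \<one> f = \<one>"
proof -
  have "phi \<one> f \<otimes> phi \<one> f = phi \<one> f"
    using phi_mult[of \<one> \<one> f] by (simp add: acte_one)
  then show ?thesis
    by (simp add: l_cancel_one')
qed

lemma c_mult_eq_0_iff:
  assumes "g \<in> carrier G"
  shows "a * c g f = 0 \<longleftrightarrow> a = 0"
proof
  assume "a * c g f = 0"
  moreover obtain u where "1 = c g f * u"
    using c_unit[OF assms, of f] by (auto elim: dvdE)
  ultimately show "a = 0"
    by (metis mult.assoc mult_1_right mult_zero_left)
qed simp

lemma c_one [simp]: "c \<one> f = 1"
proof -
  have "c \<one> f * c \<one> f = c \<one> f"
    using c_mult[of \<one> \<one> f] by (simp add: acte_one)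
  then have "(c \<one> f - 1) * c \<one> f = 0"
    by (simp add: algebra_simps)
  then show ?thesis
    by (simp add: c_mult_eq_0_iff)
qed

lemma acte_inv_acte [simp]: "g \<in> carrier G \<Longrightarrow> acte (inv g) (acte g f) = f"
  and acte_acte_inv [simp]: "g \<in> carrier G \<Longrightarrow> acte g (acte (inv g) f) = f"
  by (metis acte_one acte_mult id_apply inv_closed l_inv r_inv)+

lemma acte_eq_iff: "g \<in> carrier G \<Longrightarrow> acte g x = y \<longleftrightarrow> x = acte (inv g) y"
  by auto

lemma actv_inv_actv [simp]: "g \<in> carrier G \<Longrightarrow> actv (inv g) (actv g x) = x"
  and actv_actv_inv [simp]: "g \<in> carrier G \<Longrightarrow> actv g (actv (inv g) x) = x"
  by (metis actv_one actv_mult id_apply inv_closed l_inv r_inv)+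

lemma actv_inj [simp]: "g \<in> carrier G \<Longrightarrow> actv g x = actv g y \<longleftrightarrow> x = y"
  by (metis actv_inv_actv)

lemma acte_inj [simp]: "g \<in> carrier G \<Longrightarrow> acte g x = acte g y \<longleftrightarrow> x = y"
  by (metis acte_inv_acte)

fun acte_path :: "'g \<Rightarrow> 'e list \<Rightarrow> 'e list" where
  "acte_path g [] = []"
| "acte_path g (f # \<alpha>) = acte g f # acte_path (phi g f) \<alpha>"

fun phi_path :: "'g \<Rightarrow> 'e list \<Rightarrow> 'g" where
  "phi_path g [] = g"
| "phi_path g (f # \<alpha>) = phi_path (phi g f) \<alpha>"

fun c_path :: "'g \<Rightarrow> 'e list \<Rightarrow> 'l" where
  "c_path g [] = 1"
| "c_path g (f # \<alpha>) = c g f * c_path (phi g f) \<alpha>"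

lemma phi_path_closed [simp]: "g \<in> carrier G \<Longrightarrow> phi_path g \<alpha> \<in> carrier G"
  by (induction \<alpha> arbitrary: g) auto

lemma path_one [simp]:
  "acte_path \<one> \<alpha> = \<alpha>" "phi_path \<one> \<alpha> = \<one>" "c_path \<one> \<alpha> = 1"
  by (induction \<alpha>) (auto simp: acte_one)

lemma path_mult:
  assumes "g \<in> carrier G" "h \<in> carrier G"
  shows "acte_path (g \<otimes> h) \<alpha> = acte_path g (acte_path h \<alpha>)
    \<and> phi_path (g \<otimes> h) \<alpha> = phi_path g (acte_path h \<alpha>) \<otimes> phi_path h \<alpha>
    \<and> c_path (g \<otimes> h) \<alpha> = c_path g (acte_path h \<alpha>) * c_path h \<alpha>"
  using assms by (induction \<alpha> arbitrary: g h) (auto simp: acte_mult phi_mult c_mult)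

(* Basis vectors are (v, \<alpha>, k) with \<alpha> a path starting at v and k \<in> G.
   The coordinate k keeps track of \<phi>, which is what lets matrix entries see \<nabla>_e. *)
fun cohn_gen_op :: "('v, 'e, 'g) cgen \<Rightarrow> 'v \<times> 'e list \<times> 'g \<Rightarrow> 'l \<times> ('v \<times> 'e list \<times> 'g)" where
  "cohn_gen_op (Ed f) (v, \<alpha>, k) =
     (if r f = v \<and> k \<in> carrier G then (1, (s f, f # \<alpha>, k)) else (0, (v, \<alpha>, k)))"
| "cohn_gen_op (Es f) (v, \<alpha>, k) =
     (if \<alpha> \<noteq> [] \<and> hd \<alpha> = f \<and> v = s f \<and> k \<in> carrier G
      then (1, (r f, tl \<alpha>, k)) else (0, (v, \<alpha>, k)))"
| "cohn_gen_op (Vg w g) (v, \<alpha>, k) =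
     (if w = actv g v \<and> k \<in> carrier G \<and> g \<in> carrier G
      then (c_path g \<alpha>, (actv g v, acte_path g \<alpha>, phi_path g \<alpha> \<otimes> k))
      else (0, (v, \<alpha>, k)))"

lemma binomial_holds_edge:
  "binomial_holds cohn_gen_op [Ed f] 1 [Vg (s f) \<one>, Ed f, Vg (r f) \<one>]"
  unfolding binomial_holds_def
  by (auto simp: mop_comp_def mop_entry_def actv_one acte_one)

lemma binomial_holds_ghost_edge:
  "binomial_holds cohn_gen_op [Es f] 1 [Vg (r f) \<one>, Es f, Vg (s f) \<one>]"
  unfolding binomial_holds_def
  by (auto simp: mop_comp_def mop_entry_def actv_one)

lemma binomial_holds_ghost_edge_edge:
  "binomial_holds cohn_gen_op [Es f, Ed f'] (if f = f' then 1 else 0) [Vg (r f) \<one>]"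
  unfolding binomial_holds_def
  by (auto simp: mop_comp_def mop_entry_def actv_one)

lemma binomial_holds_group_group:
  "g \<in> carrier G \<Longrightarrow> h \<in> carrier G \<Longrightarrow>
   binomial_holds cohn_gen_op [Vg v g, Vg w h] (if v = actv g w then 1 else 0) [Vg v (g \<otimes> h)]"
  unfolding binomial_holds_def
  by (auto simp: mop_comp_def mop_entry_def actv_mult path_mult m_assoc mult.commute)

lemma binomial_holds_group_edge:
  "g \<in> carrier G \<Longrightarrow>
   binomial_holds cohn_gen_op [Vg v g, Ed f] (if v = actv g (s f) then c g f else 0)
     [Ed (acte g f), Vg (r (acte g f)) (phi g f)]"
  unfolding binomial_holds_def
  by (auto simp: mop_comp_def mop_entry_def s_acte r_acte)

lemma binomial_holds_ghost_edge_group: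
  assumes g: "g \<in> carrier G"
  shows "binomial_holds cohn_gen_op [Es f, Vg v g] (if v = s f then c g (acte (inv g) f) else 0)
     [Vg (r f) (phi g (acte (inv g) f)), Es (acte (inv g) f)]"
  unfolding binomial_holds_def
proof (intro allI)
  fix x y :: "'v \<times> 'e list \<times> 'g"
  obtain u \<alpha> k where x: "x = (u, \<alpha>, k)" by (cases x)
  have acte_eq: "acte g f' = f \<longleftrightarrow> f' = acte (inv g) f" for f'
    using g by auto
  have s_eq: "s f = actv g u \<longleftrightarrow> u = s (acte (inv g) f)"
    using g by (auto simp: s_acte)
  have r_eq: "r (acte (inv g) f) = actv (inv g) (r f)"
    using g by (simp add: r_acte)
  show "mop_entry (word_op cohn_gen_op [Es f, Vg v g]) x y
      = (if v = s f then c g (acte (inv g) f) else 0)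
        * mop_entry (word_op cohn_gen_op [Vg (r f) (phi g (acte (inv g) f)), Es (acte (inv g) f)]) x y"
    using g unfolding x
    by (cases \<alpha>) (auto simp: mop_comp_def mop_entry_def acte_eq s_eq r_eq m_assoc)
qed

lemma cohn_rels_binomial:
  "cohn_rels G r s actv acte phi c
     \<subseteq> {fdiff (fmon w1) (fsmult a (fmon w2)) | w1 a w2. binomial_holds cohn_gen_op w1 a w2}"
proof -
  have binomialI: "fdiff (fmon w1) q
      \<in> {fdiff (fmon w1) (fsmult a (fmon w2)) | w1 a w2. binomial_holds cohn_gen_op w1 a w2}"
    if "binomial_holds cohn_gen_op w1 a w2" "q = fsmult a (fmon w2)" for w1 a w2 q
    using that by blast
  show ?thesis
    unfolding cohn_rels_def
    by (intro Un_least subsetI; elim CollectE exE conjE; hypsubst; rule binomialI,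
        rule binomial_holds_edge binomial_holds_ghost_edge binomial_holds_ghost_edge_edge
          binomial_holds_group_group binomial_holds_group_edge binomial_holds_ghost_edge_group;
        auto simp: fsmult_def fzero_def)
qed

lemma cohn_zero_rep_entry:
  assumes "cohn_zero G r s actv acte phi c p"
  shows "finite {w. p w \<noteq> 0} \<and> rep_entry cohn_gen_op p x y = 0"
  using assms unfolding cohn_zero_def by (rule rep_entry_gen_ideal[OF cohn_rels_binomial])

section \<open>The annihilator of ee*\<close>

lemma nabla_eq_iff:
  assumes g: "g \<in> carrier G" and h: "h \<in> carrier G"
  shows "nabla G acte phi e g = nabla G acte phi e h
     \<longleftrightarrow> acte (g \<otimes> inv h) e = e \<and> phi (g \<otimes> inv h) e = \<one>"
proof -
  define f where "f = acte (inv h) e"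
  have acte_eq: "acte (g \<otimes> inv h) e = e \<longleftrightarrow> acte (inv g) e = f"
    using g h by (simp add: f_def acte_mult acte_eq_iff eq_commute)
  have phi_eq: "phi (g \<otimes> inv h) e = phi g f \<otimes> phi (inv h) e"
    using g h by (simp add: f_def phi_mult)
  have "phi h f \<otimes> phi (inv h) e = \<one>"
    using h phi_mult[of h "inv h" e] by (simp add: f_def)
  then have "phi (g \<otimes> inv h) e = \<one> \<longleftrightarrow> phi g f = phi h f"
    using g h unfolding phi_eq by (metis phi_closed inv_closed right_cancel)
  moreover have "nabla G acte phi e g = nabla G acte phi e h
      \<longleftrightarrow> acte (inv g) e = f \<and> phi g (acte (inv g) e) = phi h f"
    by (auto simp: nabla_def f_def)
  ultimately show ?thesis
    using acte_eq by auto
qed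

lemma strongly_fixing_trivial_iff_inj_nabla:
  "(\<forall>g\<in>carrier G. acte g e = e \<and> phi g e = \<one> \<longrightarrow> g = \<one>)
     \<longleftrightarrow> inj_on (nabla G acte phi e) (carrier G)"
proof
  assume trivial: "\<forall>g\<in>carrier G. acte g e = e \<and> phi g e = \<one> \<longrightarrow> g = \<one>"
  show "inj_on (nabla G acte phi e) (carrier G)"
  proof (rule inj_onI)
    fix g h
    assume "g \<in> carrier G" "h \<in> carrier G" "nabla G acte phi e g = nabla G acte phi e h"
    then show "g = h"
      using trivial by (auto simp: nabla_eq_iff inv_solve_right')
  qed
next
  assume inj: "inj_on (nabla G acte phi e) (carrier G)"
  show "\<forall>g\<in>carrier G. acte g e = e \<and> phi g e = \<one> \<longrightarrow> g = \<one>"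
  proof (intro ballI impI)
    fix g assume g: "g \<in> carrier G" and fixing: "acte g e = e \<and> phi g e = \<one>"
    then have "nabla G acte phi e g = nabla G acte phi e \<one>"
      by (simp add: nabla_eq_iff)
    then show "g = \<one>"
      using inj g by (meson inj_onD one_closed)
  qed
qed

lemma mop_entry_ee_star_group:
  assumes "k \<in> carrier G"
  shows "mop_entry (word_op cohn_gen_op [Ed e, Es e, Vg (s e) k]) (s f, [f], \<one>) (s e, [e], h)
     = (if acte k f = e \<and> phi k f = h then c k f else 0)"
  using assms by (auto simp: mop_comp_def mop_entry_def s_acte)

lemma EP_Ann_trivial_if_inj_nabla:
  assumes inj: "inj_on (nabla G acte phi e) (carrier G)"
    and lam: "lam \<in> EP_Ann G r s actv acte phi c e"
  shows "lam = (\<lambda>_. 0)"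
proof
  fix g
  define S where "S = {k. lam k \<noteq> 0}"
  have S: "finite S" "S \<subseteq> carrier G"
    and zero: "cohn_zero G r s actv acte phi c (\<lambda>w. \<Sum>k\<in>S. lam k * fmon [Ed e, Es e, Vg (s e) k] w)"
    using lam by (auto simp: EP_Ann_def S_def)
  show "lam g = 0"
  proof (cases "g \<in> carrier G")
    case False
    then show ?thesis
      using lam by (simp add: EP_Ann_def)
  next
    case g: True
    define f where "f = acte (inv g) e"
    have entry: "mop_entry (word_op cohn_gen_op [Ed e, Es e, Vg (s e) k]) (s f, [f], \<one>) (s e, [e], phi g f)
        = (if k = g then c g f else 0)" if k: "k \<in> carrier G" for k
    proof -
      have "acte k f = e \<longleftrightarrow> acte (inv k) e = f"
        using k by (auto simp: acte_eq_iff)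
      then have "acte k f = e \<and> phi k f = phi g f \<longleftrightarrow> nabla G acte phi e k = nabla G acte phi e g"
        by (auto simp: nabla_def f_def)
      also have "\<dots> \<longleftrightarrow> k = g"
        using inj g k by (meson inj_onD)
      finally show ?thesis
        unfolding mop_entry_ee_star_group[OF k] by simp
    qed
    have "0 = rep_entry cohn_gen_op (\<lambda>w. \<Sum>k\<in>S. lam k * fmon [Ed e, Es e, Vg (s e) k] w)
        (s f, [f], \<one>) (s e, [e], phi g f)"
      using cohn_zero_rep_entry[OF zero] by simp
    also have "\<dots> = (\<Sum>k\<in>S. lam k
        * mop_entry (word_op cohn_gen_op [Ed e, Es e, Vg (s e) k]) (s f, [f], \<one>) (s e, [e], phi g f))"
      using S(1)
      by (simp add: rep_entry_sum finite_support_fmon finite_support_fsmult fsmult_def[symmetric]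
          rep_entry_fsmult[OF finite_support_fmon] rep_entry_fmon)
    also have "\<dots> = (\<Sum>k\<in>S. if k = g then lam g * c g f else 0)"
      using S(2) by (intro sum.cong) (auto simp: entry simp del: word_op.simps)
    also have "\<dots> = lam g * c g f"
      using S(1) by (simp add: S_def)
    finally show ?thesis
      using g c_mult_eq_0_iff by simp
  qed
qed

lemma ghost_edge_fixing_rel:
  assumes k: "k \<in> carrier G" and fixing: "acte k e = e"
  shows "fdiff (fmon [Es e, Vg (s e) k]) (fsmult (c k e) (fmon [Vg (r e) (phi k e), Es e]))
     \<in> cohn_rels G r s actv acte phi c"
proof -
  have "acte (inv k) e = e"
    using k fixing by (simp add: acte_eq_iff)
  then have "fdiff (fmon [Es e, Vg (s e) k]) (fsmult (c k e) (fmon [Vg (r e) (phi k e), Es e]))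
      = fdiff (fmon [Es e, Vg (s e) k])
          (if s e = s e
           then fsmult (c k (acte (inv k) e))
                  (fmon [Vg (r e) (phi k (acte (inv k) e)), Es (acte (inv k) e)])
           else fzero)"
    by simp
  then show ?thesis
    unfolding cohn_rels_def using k by (intro UnI2) blast
qed

lemma strongly_fixing_in_EP_Ann:
  assumes g: "g \<in> carrier G" "g \<noteq> \<one>" and fixing: "acte g e = e" "phi g e = \<one>"
  shows "(\<lambda>k. if k = \<one> then c g e else if k = g then -1 else 0) \<in> EP_Ann G r s actv acte phi c e"
proof -
  define lam where "lam = (\<lambda>k. if k = \<one> then c g e else if k = g then -1 else (0::'l))"
  define ee_star :: "'g \<Rightarrow> ('v, 'e, 'g) cgen list \<Rightarrow> 'l"
    where "ee_star k = fmon [Ed e, Es e, Vg (s e) k]" for k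
  have support: "{k. lam k \<noteq> 0} \<subseteq> {\<one>, g}"
    by (auto simp: lam_def)
  have combination: "(\<lambda>w. \<Sum>k | lam k \<noteq> 0. lam k * ee_star k w) = (\<lambda>w. c g e * ee_star \<one> w - ee_star g w)"
  proof
    fix w
    have "(\<Sum>k | lam k \<noteq> 0. lam k * ee_star k w) = (\<Sum>k\<in>{\<one>, g}. lam k * ee_star k w)"
      using support by (intro sum.mono_neutral_left) auto
    then show "(\<Sum>k | lam k \<noteq> 0. lam k * ee_star k w) = c g e * ee_star \<one> w - ee_star g w"
      using g(2) by (simp add: lam_def)
  qed
  (* c(g,e) ee* - ee*(s(e)g) = e (c(g,e) \<rho> 1 - \<rho> g), where \<rho> k is the relation of ghost_edge_fixing_rel *)
  define X where "X = fadd
      (fsmult (c g e) (fmul (fmul (fmon [Ed e])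
        (fdiff (fmon [Es e, Vg (s e) \<one>]) (fsmult 1 (fmon [Vg (r e) \<one>, Es e])))) (fmon [])))
      (fsmult (-1) (fmul (fmul (fmon [Ed e])
        (fdiff (fmon [Es e, Vg (s e) g]) (fsmult (c g e) (fmon [Vg (r e) \<one>, Es e])))) (fmon [])))"
  have "X \<in> gen_ideal (cohn_rels G r s actv acte phi c)"
    unfolding X_def
    using ghost_edge_fixing_rel[of \<one>] ghost_edge_fixing_rel[OF g(1) fixing(1)] fixing(2)
    by (intro gen_ideal.add gen_ideal.gen) (simp_all add: acte_one)
  moreover have "X = (\<lambda>w. c g e * ee_star \<one> w - ee_star g w)"
    unfolding X_def fmul_fmon_binomial_fmon
    by (auto simp: fadd_def fsmult_def fdiff_def ee_star_def algebra_simps)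
  ultimately have "cohn_zero G r s actv acte phi c (\<lambda>w. \<Sum>k | lam k \<noteq> 0. lam k * ee_star k w)"
    unfolding cohn_zero_def combination by simp
  moreover have "finite {k. lam k \<noteq> 0}"
    using support by (rule finite_subset) simp
  moreover have "\<forall>k. k \<notin> carrier G \<longrightarrow> lam k = 0"
    using g(1) by (auto simp: lam_def)
  ultimately show ?thesis
    unfolding EP_Ann_def lam_def[symmetric] ee_star_def by blast
qed

lemma EP_Ann_nontrivial_if_strongly_fixing:
  assumes "(0::'l) \<noteq> 1"
    and g: "g \<in> carrier G" "g \<noteq> \<one>" and fixing: "acte g e = e" "phi g e = \<one>"
  shows "EP_Ann G r s actv acte phi c e \<noteq> {\<lambda>_. 0}"
proof
  assume "EP_Ann G r s actv acte phi c e = {\<lambda>_. 0}"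
  then have "(\<lambda>k. if k = \<one> then c g e else if k = g then -1 else 0) = (\<lambda>_. 0::'l)"
    using strongly_fixing_in_EP_Ann[OF g fixing] by blast
  then have "(-1::'l) = 0"
    using g(2) by (metis (full_types))
  then show False
    using assms(1) by simp
qed

end

lemma zero_in_EP_Ann: "(\<lambda>_. 0) \<in> EP_Ann G r s actv acte phi c e"
  using gen_ideal.zero by (simp add: EP_Ann_def cohn_zero_def fzero_def)

theorem lemma3p6:
  fixes G :: "('g, 'm) monoid_scheme"
    and r s :: "'e \<Rightarrow> 'v"
    and actv :: "'g \<Rightarrow> 'v \<Rightarrow> 'v" and acte :: "'g \<Rightarrow> 'e \<Rightarrow> 'e"
    and phi :: "'g \<Rightarrow> 'e \<Rightarrow> 'g" and c :: "'g \<Rightarrow> 'e \<Rightarrow> 'l::comm_ring_1"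
    and e :: 'e
  assumes "twisted_EP_tuple G r s actv acte phi c"
    and "(0::'l) \<noteq> 1"
  shows "(EP_Ann G r s actv acte phi c e = {\<lambda>_. 0}
            \<longleftrightarrow> (\<forall>g\<in>carrier G. acte g e = e \<and> phi g e = \<one>\<^bsub>G\<^esub> \<longrightarrow> g = \<one>\<^bsub>G\<^esub>))
       \<and> ((\<forall>g\<in>carrier G. acte g e = e \<and> phi g e = \<one>\<^bsub>G\<^esub> \<longrightarrow> g = \<one>\<^bsub>G\<^esub>)
            \<longleftrightarrow> inj_on (nabla G acte phi e) (carrier G))"
proof -
  interpret twisted_EP G r s actv acte phi c
    using assms(1) by unfold_locales
  have "EP_Ann G r s actv acte phi c e = {\<lambda>_. 0}
      \<longleftrightarrow> (\<forall>g\<in>carrier G. acte g e = e \<and> phi g e = \<one>\<^bsub>G\<^esub> \<longrightarrow> g = \<one>\<^bsub>G\<^esub>)"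
  proof
    assume "EP_Ann G r s actv acte phi c e = {\<lambda>_. 0}"
    then show "\<forall>g\<in>carrier G. acte g e = e \<and> phi g e = \<one>\<^bsub>G\<^esub> \<longrightarrow> g = \<one>\<^bsub>G\<^esub>"
      using EP_Ann_nontrivial_if_strongly_fixing[OF assms(2)] by blast
  next
    assume "\<forall>g\<in>carrier G. acte g e = e \<and> phi g e = \<one>\<^bsub>G\<^esub> \<longrightarrow> g = \<one>\<^bsub>G\<^esub>"
    then have "EP_Ann G r s actv acte phi c e \<subseteq> {\<lambda>_. 0}"
      using EP_Ann_trivial_if_inj_nabla strongly_fixing_trivial_iff_inj_nabla by blast
    moreover have "{\<lambda>_. 0} \<subseteq> EP_Ann G r s actv acte phi c e"
      using zero_in_EP_Ann by simp
    ultimately show "EP_Ann G r s actv acte phi c e = {\<lambda>_. 0}"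
      by (rule subset_antisym)
  qed
  then show ?thesis
    using strongly_fixing_trivial_iff_inj_nabla by blast
qed

end
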